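(* For every $C>0$ there exist $c>0$ and $d_0$ such that the following holds for all $d\ge d_0$ and $\kappa\ge1$. Let $\pi^*=\mathcal N(0,I_d)$, let $\pi_0$ be $\pi^*$ conditioned on the set $\{x:\|x\|_2^2\le d/2\}$, and consider the MALA chain targeting $\pi^*$ with step size $0<h\le C\frac{\log d}{\kappa d}$, started from $x_0\sim\pi_0$. Then for every $T\le c\,\kappa d/\log^2 d$, the law $\pi_T$ of the $T$-th iterate satisfies $\|\pi_T-\pi^*\|_{\mathrm{TV}}>1/e$.
   Context: MALA targeting $\pi\propto e^{-f}$ with step size $h>0$: from $x$, propose $y=x-h\nabla f(x)+\sqrt{2h}\,g$, $g\sim\mathcal N(0,I_d)$; move to $y$ with probability $\min\{1,\exp(f(x)-f(y)+\frac{1}{4h}(\|y-x+h\nabla f(x)\|_2^2-\|x-y+h\nabla f(y)\|_2^2))\}$, else stay. Here $f(x)=\frac12\|x\|_2^2$. $\|\mu-\nu\|_{\mathrm{TV}}=\sup_A|\mu(A)-\nu(A)|$. *)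

theory Defs
  imports "HOL-Probability.Probability"
begin

text \<open>Vectors in R^d are represented as functions nat => real, extensional on {..<d}
  (the carrier of the finite product measure PiM {..<d}).\<close>

definition state_space :: "nat \<Rightarrow> (nat \<Rightarrow> real) measure" where
  "state_space d = PiM {..<d} (\<lambda>_. lborel)"

definition sqnorm :: "nat \<Rightarrow> (nat \<Rightarrow> real) \<Rightarrow> real" where
  "sqnorm d x = (\<Sum>i<d. (x i)\<^sup>2)"

definition gauss :: "nat \<Rightarrow> (nat \<Rightarrow> real) measure" where
  "gauss d = PiM {..<d} (\<lambda>_. density lborel std_normal_density)"

definition f_pot :: "nat \<Rightarrow> (nat \<Rightarrow> real) \<Rightarrow> real" where
  "f_pot d x = sqnorm d x / 2"

text \<open>MALA acceptance probability for f(x)=|x|^2/2 (grad f(x) = x).\<close>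
definition mala_accept :: "nat \<Rightarrow> real \<Rightarrow> (nat \<Rightarrow> real) \<Rightarrow> (nat \<Rightarrow> real) \<Rightarrow> real" where
  "mala_accept d h x y = min 1 (exp (f_pot d x - f_pot d y
      + (1 / (4 * h)) * (sqnorm d (\<lambda>i. y i - x i + h * x i)
                        - sqnorm d (\<lambda>i. x i - y i + h * y i))))"

definition mala_proposal :: "nat \<Rightarrow> real \<Rightarrow> (nat \<Rightarrow> real) \<Rightarrow> (nat \<Rightarrow> real) measure" where
  "mala_proposal d h x =
     distr (gauss d) (state_space d)
       (\<lambda>g. \<lambda>i\<in>{..<d}. x i - h * x i + sqrt (2 * h) * g i)"

definition mala_kernel :: "nat \<Rightarrow> real \<Rightarrow> (nat \<Rightarrow> real) \<Rightarrow> (nat \<Rightarrow> real) measure" where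
  "mala_kernel d h x =
     mala_proposal d h x \<bind>
       (\<lambda>y. distr (measure_pmf (bernoulli_pmf (mala_accept d h x y))) (state_space d)
               (\<lambda>b. if b then y else x))"

definition mala_law :: "nat \<Rightarrow> real \<Rightarrow> (nat \<Rightarrow> real) measure \<Rightarrow> nat \<Rightarrow> (nat \<Rightarrow> real) measure" where
  "mala_law d h \<mu> T = ((\<lambda>\<nu>. \<nu> \<bind> mala_kernel d h) ^^ T) \<mu>"

definition mala_init :: "nat \<Rightarrow> (nat \<Rightarrow> real) measure" where
  "mala_init d = uniform_measure (gauss d) {x \<in> space (gauss d). sqnorm d x \<le> real d / 2}"

definition tv_dist :: "nat \<Rightarrow> (nat \<Rightarrow> real) measure \<Rightarrow> (nat \<Rightarrow> real) measure \<Rightarrow> real" where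
  "tv_dist d \<mu> \<nu> = (SUP A\<in>sets (state_space d). \<bar>measure \<mu> A - measure \<nu> A\<bar>)"

end

theory Submission
  imports Defs "HOL-Real_Asymp.Real_Asymp"
begin

text \<open>For \<open>f(x) = |x|\<^sup>2/2\<close> the MALA acceptance probability is \<open>min 1 (exp (h/4 (|x|\<^sup>2 - |y|\<^sup>2)))\<close>,
  so a proposal that lowers the norm is always accepted and the accept/reject step never makes the
  expected squared norm exceed that of the proposal, which is \<open>(1 - h)\<^sup>2 |x|\<^sup>2 + 2 h d\<close>.
  Starting from \<open>\<pi>\<^sub>0\<close>, whose second moment is at most \<open>d/2\<close>, the second moment after \<open>T\<close> steps is
  thus at most \<open>d/2 + 2 h d T\<close>, which stays close to \<open>d/2\<close> as long as \<open>h T\<close> is small; the hypotheses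
  give \<open>h T \<le> c C / log d\<close>. By Markov's inequality the \<open>T\<close>-th iterate then puts mass more than \<open>0.43\<close>
  on \<open>{|x|\<^sup>2 \<le> 22 d/25}\<close>, whereas a Chernoff bound shows that \<open>N(0, I\<^sub>d)\<close>, concentrated near
  \<open>|x|\<^sup>2 = d\<close>, gives this set mass less than \<open>1/100\<close> for large \<open>d\<close>.\<close>

abbreviation std_normal :: "real measure" where
  "std_normal \<equiv> density lborel std_normal_density"

lemma prob_space_std_normal: "prob_space std_normal"
  by (rule prob_space_normal_density) simp

lemma nn_integral_std_normal_affine_sq:
  "(\<integral>\<^sup>+z. ennreal ((a + b * z)\<^sup>2) \<partial>std_normal) = ennreal (a\<^sup>2 + b\<^sup>2)"
proof -
  have expand: "\<And>z. std_normal_density z * (a + b * z)\<^sup>2 =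
      a\<^sup>2 * (std_normal_density z * z^0) + (2*a*b) * (std_normal_density z * z^1)
      + b\<^sup>2 * (std_normal_density z * z^2)"
    by (simp add: power2_eq_square algebra_simps)
  have moment: "integrable lborel (\<lambda>z. std_normal_density z * z^k)" for k
    by (rule integrable_std_normal_moment)
  have int: "integrable lborel (\<lambda>z. std_normal_density z * (a + b * z)\<^sup>2)"
    unfolding expand using moment[of 0] moment[of 1] moment[of 2] by auto
  have "(\<integral>z. std_normal_density z * z^0 \<partial>lborel) = 1"
    and "(\<integral>z. std_normal_density z * z^1 \<partial>lborel) = 0"
    and "(\<integral>z. std_normal_density z * z^2 \<partial>lborel) = 1"
    using integral_std_normal_moment_even[of 0] integral_std_normal_moment_odd[of 0]
      integral_std_normal_moment_even[of 1] by simp_all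
  then have "(\<integral>z. std_normal_density z * (a + b * z)\<^sup>2 \<partial>lborel) = a\<^sup>2 + b\<^sup>2"
    unfolding expand using moment[of 0] moment[of 1] moment[of 2] by simp
  then show ?thesis
    by (simp add: nn_integral_density ennreal_mult'[symmetric] nn_integral_eq_integral[OF int])
qed

lemma nn_integral_std_normal_exp_sq:
  assumes t: "t \<ge> 0"
  shows "(\<integral>\<^sup>+z. ennreal (exp (- t * z\<^sup>2)) \<partial>std_normal) = ennreal (1 / sqrt (1 + 2*t))"
proof -
  define \<sigma> where "\<sigma> = 1 / sqrt (1 + 2*t)"
  have sp: "sqrt (1 + 2*t) > 0" using t by simp
  have \<sigma>: "\<sigma> > 0" "\<sigma>\<^sup>2 = 1 / (1 + 2*t)" using sp t by (simp_all add: \<sigma>_def power_divide)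
  \<comment> \<open>The integrand is a rescaled centred normal density of variance \<open>1 / (1 + 2 t)\<close>.\<close>
  have rescale: "std_normal_density z * exp (- t * z\<^sup>2) = normal_density 0 \<sigma> z / sqrt (1 + 2*t)" for z
  proof -
    have "normal_density 0 \<sigma> z = 1 / sqrt (2 * pi / (1 + 2*t)) * exp (-z\<^sup>2 * (1 + 2*t) / 2)"
      unfolding normal_density_def \<sigma>(2) using t by (simp add: field_simps)
    also have "sqrt (2 * pi / (1 + 2*t)) = sqrt (2*pi) / sqrt (1 + 2*t)"
      by (simp add: real_sqrt_divide)
    also have "exp (-z\<^sup>2 * (1 + 2*t) / 2) = exp (- z\<^sup>2 / 2) * exp (- t * z\<^sup>2)"
      by (simp add: exp_add[symmetric] field_simps)
    finally show ?thesis using sp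
      by (simp add: std_normal_density_def field_simps)
  qed
  have "(\<integral>\<^sup>+z. ennreal (exp (- t * z\<^sup>2)) \<partial>std_normal)
      = (\<integral>\<^sup>+z. ennreal (normal_density 0 \<sigma> z / sqrt (1 + 2*t)) \<partial>lborel)"
    using rescale by (simp add: nn_integral_density ennreal_mult'[symmetric])
  also have "\<dots> = ennreal (\<integral>z. normal_density 0 \<sigma> z / sqrt (1 + 2*t) \<partial>lborel)"
    by (rule nn_integral_eq_integral)
      (use integrable_normal_density[OF \<sigma>(1), of 0] sp in \<open>auto simp del: integrable_normal_density\<close>)
  also have "\<dots> = ennreal (1 / sqrt (1 + 2*t))"
    using integral_normal_density[OF \<sigma>(1), of 0] by (simp del: integral_normal_density)
  finally show ?thesis .
qed

lemma emeasure_std_normal_centred_interval_pos: "0 < emeasure std_normal {-(1/2)..1/2}"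
proof -
  define c where "c = exp (-1/8) / sqrt (2 * pi)"
  have c: "c > 0" by (simp add: c_def)
  have "ennreal c * indicator {-(1/2)..1/2} z \<le> ennreal (std_normal_density z) * indicator {-(1/2)..1/2} z"
    for z :: real
  proof (cases "z \<in> {-(1/2)..1/2}")
    case True
    then have "\<bar>z\<bar> \<le> \<bar>1/2\<bar>" by auto
    then have "z\<^sup>2 \<le> (1/2)\<^sup>2" by (simp only: abs_le_square_iff)
    then have "exp (-1/8) \<le> exp (- z\<^sup>2 / 2)" by (simp add: power_divide)
    then have "c \<le> std_normal_density z" by (simp add: c_def std_normal_density_def divide_right_mono)
    then show ?thesis by (intro mult_right_mono ennreal_leI) auto
  qed simp
  then have "(\<integral>\<^sup>+z. ennreal c * indicator {-(1/2)..1/2::real} z \<partial>lborel)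
      \<le> (\<integral>\<^sup>+z. ennreal (std_normal_density z) * indicator {-(1/2)..1/2} z \<partial>lborel)"
    by (rule nn_integral_mono)
  then have "ennreal c \<le> emeasure std_normal {-(1/2)..1/2}"
    by (simp add: emeasure_density nn_integral_cmult_indicator)
  then show ?thesis using c by (metis ennreal_less_zero_iff order_less_le_trans)
qed

lemma sets_gauss: "sets (gauss d) = sets (state_space d)"
  unfolding gauss_def state_space_def by (intro sets_PiM_cong) auto

lemma space_gauss: "space (gauss d) = space (state_space d)"
  using sets_gauss by (rule sets_eq_imp_space_eq)

lemma prob_space_gauss: "prob_space (gauss d)"
  unfolding gauss_def by (intro prob_space_PiM) (simp add: prob_space_std_normal)

lemma emeasure_gauss_neq_top: "emeasure (gauss d) A \<noteq> \<infinity>"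
  using neq_top_trans[OF ennreal_one_neq_top prob_space.emeasure_le_1[OF prob_space_gauss]] by simp

interpretation std_normal_product: product_sigma_finite "\<lambda>_::nat. std_normal"
  unfolding product_sigma_finite_def
  using prob_space_imp_sigma_finite[OF prob_space_std_normal] by simp

lemma nn_integral_gauss_prod:
  assumes "\<And>i. i < d \<Longrightarrow> f i \<in> borel_measurable borel"
  shows "(\<integral>\<^sup>+x. (\<Prod>i<d. f i (x i)) \<partial>gauss d) = (\<Prod>i<d. \<integral>\<^sup>+z. f i z \<partial>std_normal)"
  unfolding gauss_def
  by (rule std_normal_product.product_nn_integral_prod) (use assms in auto)

lemma nn_integral_gauss_component:
  assumes "i < d" and [measurable]: "F \<in> borel_measurable borel"
  shows "(\<integral>\<^sup>+x. F (x i) \<partial>gauss d) = (\<integral>\<^sup>+z. F z \<partial>std_normal)"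
proof -
  have "distr (gauss d) std_normal (\<lambda>x. x i) = std_normal"
    unfolding gauss_def by (rule distr_PiM_component) (use assms prob_space_std_normal in auto)
  then have "(\<integral>\<^sup>+z. F z \<partial>std_normal) = (\<integral>\<^sup>+z. F z \<partial>distr (gauss d) std_normal (\<lambda>x. x i))"
    by simp
  also have "\<dots> = (\<integral>\<^sup>+x. F (x i) \<partial>gauss d)"
    by (rule nn_integral_distr) (use assms in \<open>auto simp: gauss_def\<close>)
  finally show ?thesis by simp
qed

lemma sqnorm_nonneg: "0 \<le> sqnorm d x"
  by (simp add: sqnorm_def sum_nonneg)

lemma measurable_sqnorm[measurable]: "sqnorm d \<in> borel_measurable (state_space d)"
  unfolding sqnorm_def state_space_def by measurable

lemma measurable_sqnorm_gauss[measurable]: "sqnorm d \<in> borel_measurable (gauss d)"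
  using measurable_sqnorm measurable_cong_sets[OF sets_gauss refl] by blast

lemma gauss_sqnorm_le_pos: "0 < emeasure (gauss d) {x \<in> space (gauss d). sqnorm d x \<le> real d / 2}"
proof -
  define cube where "cube = (\<Pi>\<^sub>E i\<in>{..<d}. {-(1/2)..1/2::real})"
  have "sqnorm d x \<le> real d / 2" if x: "x \<in> cube" for x
  proof -
    have "(x i)\<^sup>2 \<le> 1/4" if "i \<in> {..<d}" for i
    proof -
      have "-(1/2) \<le> x i" "x i \<le> 1/2" using x that by (simp_all add: cube_def PiE_iff)
      then have "\<bar>x i\<bar> \<le> 1/2" by (intro abs_leI) linarith+
      then have "(x i)\<^sup>2 \<le> (1/2)\<^sup>2" using abs_le_square_iff[of "x i" "1/2"] by simp
      then show ?thesis by (simp add: power_divide)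
    qed
    then have "sqnorm d x \<le> real (card {..<d}) * (1/4)"
      unfolding sqnorm_def by (rule sum_bounded_above)
    then show ?thesis by simp
  qed
  moreover have "cube \<subseteq> space (gauss d)"
    unfolding cube_def gauss_def space_PiM by (rule PiE_mono) simp
  ultimately have sub: "cube \<subseteq> {x \<in> space (gauss d). sqnorm d x \<le> real d / 2}"
    by blast
  have "emeasure (gauss d) cube = emeasure std_normal {-(1/2)..1/2} ^ d"
    unfolding gauss_def cube_def by (subst std_normal_product.emeasure_PiM) auto
  also have "\<dots> > 0"
    using emeasure_std_normal_centred_interval_pos
    by (induction d) (auto simp: ennreal_zero_less_mult_iff)
  finally show ?thesis
    using emeasure_mono[OF sub] by (simp add: order_less_le_trans)
qed

lemma gauss_sqnorm_lower_tail:
  assumes t: "t > 0"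
  shows "measure (gauss d) {x \<in> space (gauss d). sqnorm d x \<le> a * d}
     \<le> exp (t * a * d) / sqrt (1 + 2*t) ^ d"
proof -
  interpret prob_space "gauss d" by (rule prob_space_gauss)
  have exp_sqnorm: "exp (- t * sqnorm d x) = (\<Prod>i<d. exp (- t * (x i)\<^sup>2))" for x
    unfolding sqnorm_def sum_distrib_left by (simp add: exp_sum)
  have "emeasure (gauss d) {x \<in> space (gauss d). sqnorm d x \<le> a * d}
      \<le> ennreal (exp (t * (a * d)))
        * (\<integral>\<^sup>+x. ennreal (exp (- t * sqnorm d x)) * indicator (space (gauss d)) x \<partial>gauss d)"
    by (rule Chernoff_ineq_nn_integral_le[OF t]) auto
  also have "(\<integral>\<^sup>+x. ennreal (exp (- t * sqnorm d x)) * indicator (space (gauss d)) x \<partial>gauss d)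
      = (\<integral>\<^sup>+x. (\<Prod>i<d. ennreal (exp (- t * (x i)\<^sup>2))) \<partial>gauss d)"
    by (intro nn_integral_cong) (subst exp_sqnorm, simp add: prod_ennreal)
  also have "\<dots> = ennreal (1 / sqrt (1 + 2*t)) ^ d"
    by (subst nn_integral_gauss_prod) (use nn_integral_std_normal_exp_sq t in auto)
  also have "ennreal (exp (t * (a * d))) * ennreal (1 / sqrt (1 + 2*t)) ^ d
      = ennreal (exp (t * a * d) / sqrt (1 + 2*t) ^ d)"
  proof -
    have "ennreal (1 / sqrt (1 + 2*t)) ^ d = ennreal (1 / sqrt (1 + 2*t) ^ d)"
      using t by (simp add: ennreal_power power_divide)
    then show ?thesis by (simp add: ennreal_mult'[symmetric] mult.assoc)
  qed
  finally show ?thesis using t by (simp add: emeasure_eq_measure ennreal_le_iff)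
qed

section \<open>Drift of iterated Markov kernels\<close>

lemma funpow_bind_in_space_prob_algebra:
  assumes K: "K \<in> M \<rightarrow>\<^sub>M prob_algebra M" and \<mu>: "\<mu> \<in> space (prob_algebra M)"
  shows "((\<lambda>\<nu>. \<nu> \<bind> K) ^^ n) \<mu> \<in> space (prob_algebra M)"
proof (induction n)
  case (Suc n)
  then show ?case
    using sets_bind'[OF Suc K] prob_space_bind'[OF Suc K] by (simp add: space_prob_algebra)
qed (simp add: \<mu>)

lemma nn_integral_bind_le_drift:
  assumes \<nu>: "\<nu> \<in> space (prob_algebra M)" and K: "K \<in> M \<rightarrow>\<^sub>M prob_algebra M"
    and V[measurable]: "V \<in> borel_measurable M"
    and drift: "\<And>x. x \<in> space M \<Longrightarrow> (\<integral>\<^sup>+y. V y \<partial>K x) \<le> V x + b"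
  shows "(\<integral>\<^sup>+y. V y \<partial>(\<nu> \<bind> K)) \<le> (\<integral>\<^sup>+y. V y \<partial>\<nu>) + b"
proof -
  have sets: "sets \<nu> = sets M" and "prob_space \<nu>"
    using \<nu> by (auto simp: space_prob_algebra)
  interpret prob_space \<nu> by fact
  have "K \<in> \<nu> \<rightarrow>\<^sub>M subprob_algebra M"
    using measurable_prob_algebraD[OF K] by (simp cong: measurable_cong_sets add: sets)
  then have "(\<integral>\<^sup>+y. V y \<partial>(\<nu> \<bind> K)) = (\<integral>\<^sup>+x. \<integral>\<^sup>+y. V y \<partial>K x \<partial>\<nu>)"
    by (rule nn_integral_bind[OF V])
  also have "\<dots> \<le> (\<integral>\<^sup>+x. V x + b \<partial>\<nu>)"
    by (rule nn_integral_mono) (simp add: drift sets_eq_imp_space_eq[OF sets])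
  also have "\<dots> = (\<integral>\<^sup>+x. V x \<partial>\<nu>) + b"
    by (subst nn_integral_add) (auto simp: emeasure_space_1 cong: measurable_cong_sets[OF sets])
  finally show ?thesis .
qed

lemma nn_integral_funpow_bind_le_drift:
  assumes \<mu>: "\<mu> \<in> space (prob_algebra M)" and K: "K \<in> M \<rightarrow>\<^sub>M prob_algebra M"
    and V: "V \<in> borel_measurable M"
    and drift: "\<And>x. x \<in> space M \<Longrightarrow> (\<integral>\<^sup>+y. V y \<partial>K x) \<le> V x + b"
  shows "(\<integral>\<^sup>+y. V y \<partial>((\<lambda>\<nu>. \<nu> \<bind> K) ^^ n) \<mu>) \<le> (\<integral>\<^sup>+y. V y \<partial>\<mu>) + of_nat n * b"
proof (induction n)
  case (Suc n)
  have "(\<integral>\<^sup>+y. V y \<partial>((\<lambda>\<nu>. \<nu> \<bind> K) ^^ Suc n) \<mu>) \<le> (\<integral>\<^sup>+y. V y \<partial>((\<lambda>\<nu>. \<nu> \<bind> K) ^^ n) \<mu>) + b"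
    using nn_integral_bind_le_drift[OF funpow_bind_in_space_prob_algebra[OF K \<mu>] K V drift] by simp
  also have "\<dots> \<le> (\<integral>\<^sup>+y. V y \<partial>\<mu>) + of_nat n * b + b"
    using Suc by (rule add_right_mono)
  finally show ?case by (simp add: algebra_simps)
qed simp

section \<open>The MALA kernel for the standard Gaussian\<close>

lemma mala_accept_eq:
  assumes "h \<noteq> 0"
  shows "mala_accept d h x y = min 1 (exp (h / 4 * (sqnorm d x - sqnorm d y)))"
proof -
  have "sqnorm d (\<lambda>i. y i - x i + h * x i) - sqnorm d (\<lambda>i. x i - y i + h * y i)
      = (2*h - h\<^sup>2) * (sqnorm d y - sqnorm d x)"
    unfolding sqnorm_def sum_subtractf[symmetric] sum_distrib_left right_diff_distrib
    by (intro sum.cong) (auto simp: power2_eq_square algebra_simps)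
  then have "f_pot d x - f_pot d y
      + (1 / (4 * h)) * (sqnorm d (\<lambda>i. y i - x i + h * x i) - sqnorm d (\<lambda>i. x i - y i + h * y i))
      = h / 4 * (sqnorm d x - sqnorm d y)"
    using assms by (simp add: f_pot_def power2_eq_square field_simps)
  then show ?thesis
    unfolding mala_accept_def by (rule arg_cong[where f="\<lambda>z. min 1 (exp z)"])
qed

lemma mala_accept_nonneg: "0 \<le> mala_accept d h x y"
  and mala_accept_le_1: "mala_accept d h x y \<le> 1"
  unfolding mala_accept_def by auto

lemma mala_accept_mix_sqnorm_le:
  assumes "h > 0"
  shows "mala_accept d h x y * sqnorm d y + (1 - mala_accept d h x y) * sqnorm d x \<le> sqnorm d y"
proof (cases "sqnorm d y \<le> sqnorm d x")
  case True
  then have "mala_accept d h x y = 1" using assms by (simp add: mala_accept_eq)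
  then show ?thesis by simp
next
  case False
  have "(1 - mala_accept d h x y) * sqnorm d x \<le> (1 - mala_accept d h x y) * sqnorm d y"
    using False mala_accept_le_1 by (intro mult_left_mono) auto
  then show ?thesis by (simp add: algebra_simps)
qed

definition accept_reject :: "nat \<Rightarrow> real \<Rightarrow> (nat \<Rightarrow> real) \<Rightarrow> (nat \<Rightarrow> real) \<Rightarrow> (nat \<Rightarrow> real) measure"
  where "accept_reject d h x y =
    distr (measure_pmf (bernoulli_pmf (mala_accept d h x y))) (state_space d) (\<lambda>b. if b then y else x)"

lemma mala_kernel_eq_bind_accept_reject: "mala_kernel d h x = mala_proposal d h x \<bind> accept_reject d h x"
  unfolding mala_kernel_def accept_reject_def ..

lemma sets_accept_reject: "sets (accept_reject d h x y) = sets (state_space d)"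
  unfolding accept_reject_def by simp

lemma nn_integral_accept_reject:
  assumes "x \<in> space (state_space d)" "y \<in> space (state_space d)"
    and "f \<in> borel_measurable (state_space d)"
  shows "(\<integral>\<^sup>+z. f z \<partial>accept_reject d h x y)
    = f y * ennreal (mala_accept d h x y) + f x * ennreal (1 - mala_accept d h x y)"
proof -
  have "(\<integral>\<^sup>+z. f z \<partial>accept_reject d h x y)
      = (\<integral>\<^sup>+b. f (if b then y else x) \<partial>measure_pmf (bernoulli_pmf (mala_accept d h x y)))"
    unfolding accept_reject_def by (rule nn_integral_distr) (use assms in auto)
  then show ?thesis using mala_accept_nonneg mala_accept_le_1 by simp
qed

lemma prob_space_accept_reject:
  assumes "x \<in> space (state_space d)" "y \<in> space (state_space d)"
  shows "prob_space (accept_reject d h x y)"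
  unfolding accept_reject_def
  by (rule prob_space.prob_space_distr) (use assms in \<open>auto simp: measure_pmf.prob_space_axioms\<close>)

lemma measurable_mala_accept [measurable]:
  "(\<lambda>p. mala_accept d h (fst p) (snd p)) \<in> borel_measurable (state_space d \<Otimes>\<^sub>M state_space d)"
  unfolding mala_accept_def f_pot_def sqnorm_def state_space_def by measurable

lemma measurable_accept_reject:
  "(\<lambda>(x, y). accept_reject d h x y) \<in> state_space d \<Otimes>\<^sub>M state_space d \<rightarrow>\<^sub>M prob_algebra (state_space d)"
proof (rule measurable_prob_algebraI)
  fix p assume "p \<in> space (state_space d \<Otimes>\<^sub>M state_space d)"
  then show "prob_space (case p of (x, y) \<Rightarrow> accept_reject d h x y)"
    by (auto simp: space_pair_measure intro: prob_space_accept_reject)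
next
  show "(\<lambda>(x, y). accept_reject d h x y) \<in> state_space d \<Otimes>\<^sub>M state_space d \<rightarrow>\<^sub>M subprob_algebra (state_space d)"
  proof (rule measurable_subprob_algebra)
    fix p assume "p \<in> space (state_space d \<Otimes>\<^sub>M state_space d)"
    then show "subprob_space (case p of (x, y) \<Rightarrow> accept_reject d h x y)"
      by (auto simp: space_pair_measure intro: prob_space_imp_subprob_space prob_space_accept_reject)
  next
    fix A assume A: "A \<in> sets (state_space d)"
    have "(\<lambda>p. indicator A (snd p) * ennreal (mala_accept d h (fst p) (snd p))
              + indicator A (fst p) * ennreal (1 - mala_accept d h (fst p) (snd p)))
          \<in> borel_measurable (state_space d \<Otimes>\<^sub>M state_space d)"
      using A by measurable
    then show "(\<lambda>p. emeasure (case p of (x, y) \<Rightarrow> accept_reject d h x y) A)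
        \<in> borel_measurable (state_space d \<Otimes>\<^sub>M state_space d)"
    proof (rule measurable_cong[THEN iffD1, rotated])
      fix p assume "p \<in> space (state_space d \<Otimes>\<^sub>M state_space d)"
      then show "indicator A (snd p) * ennreal (mala_accept d h (fst p) (snd p))
            + indicator A (fst p) * ennreal (1 - mala_accept d h (fst p) (snd p))
          = emeasure (case p of (x, y) \<Rightarrow> accept_reject d h x y) A"
        using A nn_integral_accept_reject[of "fst p" d "snd p" "indicator A" h]
        by (auto simp: space_pair_measure split_beta sets_accept_reject)
    qed
  qed (auto simp: sets_accept_reject)
qed

lemma measurable_mala_proposal_map [measurable]:
  "(\<lambda>(x, g). \<lambda>i\<in>{..<d}. x i - h * x i + sqrt (2 * h) * g i)
     \<in> state_space d \<Otimes>\<^sub>M gauss d \<rightarrow>\<^sub>M state_space d"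
proof -
  have "(\<lambda>(x, g). \<lambda>i\<in>{..<d}. x i - h * x i + sqrt (2 * h) * g i)
     \<in> state_space d \<Otimes>\<^sub>M state_space d \<rightarrow>\<^sub>M state_space d"
    unfolding state_space_def by measurable
  then show ?thesis
    by (subst measurable_cong_sets[OF sets_pair_measure_cong[OF refl sets_gauss] refl])
qed

lemma measurable_mala_proposal:
  "mala_proposal d h \<in> state_space d \<rightarrow>\<^sub>M prob_algebra (state_space d)"
proof -
  have "(\<lambda>x. gauss d) \<in> state_space d \<rightarrow>\<^sub>M prob_algebra (gauss d)"
    by (rule measurable_const) (simp add: space_prob_algebra prob_space_gauss)
  then show ?thesis
    unfolding mala_proposal_def[abs_def] by (rule measurable_distr_prob_space2) simp
qed

lemma measurable_mala_kernel:
  "mala_kernel d h \<in> state_space d \<rightarrow>\<^sub>M prob_algebra (state_space d)"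
  unfolding mala_kernel_eq_bind_accept_reject[abs_def]
  using measurable_mala_proposal measurable_accept_reject
  by (rule measurable_bind_prob_space2)

lemma nn_integral_mala_proposal_sqnorm:
  assumes "h \<ge> 0"
  shows "(\<integral>\<^sup>+y. ennreal (sqnorm d y) \<partial>mala_proposal d h x)
      = ennreal ((1 - h)\<^sup>2 * sqnorm d x + 2 * h * d)"
proof -
  have [measurable]: "(\<lambda>g. \<lambda>i\<in>{..<d}. x i - h * x i + sqrt (2 * h) * g i) \<in> gauss d \<rightarrow>\<^sub>M state_space d"
    unfolding state_space_def gauss_def by measurable
  have "(\<integral>\<^sup>+y. ennreal (sqnorm d y) \<partial>mala_proposal d h x)
      = (\<integral>\<^sup>+g. ennreal (sqnorm d (\<lambda>i\<in>{..<d}. x i - h * x i + sqrt (2 * h) * g i)) \<partial>gauss d)"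
    unfolding mala_proposal_def by (rule nn_integral_distr) simp_all
  also have "\<dots> = (\<integral>\<^sup>+g. (\<Sum>i<d. ennreal (((1 - h) * x i + sqrt (2 * h) * g i)\<^sup>2)) \<partial>gauss d)"
    by (intro nn_integral_cong) (simp add: sqnorm_def algebra_simps)
  also have "\<dots> = (\<Sum>i<d. \<integral>\<^sup>+g. ennreal (((1 - h) * x i + sqrt (2 * h) * g i)\<^sup>2) \<partial>gauss d)"
    by (rule nn_integral_sum) (simp add: gauss_def)
  also have "\<dots> = (\<Sum>i<d. ennreal (((1 - h) * x i)\<^sup>2 + (sqrt (2 * h))\<^sup>2))"
  proof (rule sum.cong[OF refl])
    fix i assume "i \<in> {..<d}"
    then show "(\<integral>\<^sup>+g. ennreal (((1 - h) * x i + sqrt (2 * h) * g i)\<^sup>2) \<partial>gauss d)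
        = ennreal (((1 - h) * x i)\<^sup>2 + (sqrt (2 * h))\<^sup>2)"
      by (subst nn_integral_gauss_component[where F="\<lambda>z. ennreal (((1 - h) * x i + sqrt (2 * h) * z)\<^sup>2)"])
        (simp_all add: nn_integral_std_normal_affine_sq del: ennreal_plus)
  qed
  also have "\<dots> = ennreal (\<Sum>i<d. ((1 - h) * x i)\<^sup>2 + (sqrt (2 * h))\<^sup>2)"
    by (rule sum_ennreal) simp
  also have "(\<Sum>i<d. ((1 - h) * x i)\<^sup>2 + (sqrt (2 * h))\<^sup>2) = (1 - h)\<^sup>2 * sqnorm d x + 2 * h * d"
    using assms by (simp add: sum.distrib sqnorm_def sum_distrib_left power_mult_distrib)
  finally show ?thesis .
qed

lemma nn_integral_mala_kernel_sqnorm_le: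
  assumes x: "x \<in> space (state_space d)" and h: "0 < h" "h \<le> 2"
  shows "(\<integral>\<^sup>+y. ennreal (sqnorm d y) \<partial>mala_kernel d h x) \<le> ennreal (sqnorm d x + 2 * h * d)"
proof -
  have "accept_reject d h x \<in> state_space d \<rightarrow>\<^sub>M prob_algebra (state_space d)"
    using measurable_Pair_compose_split[OF measurable_accept_reject measurable_const[OF x] measurable_ident]
    by simp
  then have AR: "accept_reject d h x \<in> mala_proposal d h x \<rightarrow>\<^sub>M subprob_algebra (state_space d)"
    using measurable_prob_algebraD by (simp add: mala_proposal_def cong: measurable_cong_sets)
  have "(\<integral>\<^sup>+y. ennreal (sqnorm d y) \<partial>mala_kernel d h x)
      = (\<integral>\<^sup>+y. \<integral>\<^sup>+z. ennreal (sqnorm d z) \<partial>accept_reject d h x y \<partial>mala_proposal d h x)"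
    unfolding mala_kernel_eq_bind_accept_reject by (rule nn_integral_bind[OF _ AR]) simp
  also have "\<dots> \<le> (\<integral>\<^sup>+y. ennreal (sqnorm d y) \<partial>mala_proposal d h x)"
  proof (rule nn_integral_mono)
    fix y assume "y \<in> space (mala_proposal d h x)"
    then have y: "y \<in> space (state_space d)" by (simp add: mala_proposal_def)
    have "(\<integral>\<^sup>+z. ennreal (sqnorm d z) \<partial>accept_reject d h x y)
        = ennreal (mala_accept d h x y * sqnorm d y + (1 - mala_accept d h x y) * sqnorm d x)"
      using mala_accept_nonneg[of d h x y] mala_accept_le_1[of d h x y] sqnorm_nonneg[of d]
      by (simp add: nn_integral_accept_reject[OF x y] ennreal_mult'[symmetric] mult.commute
          flip: ennreal_plus)
    also have "\<dots> \<le> ennreal (sqnorm d y)"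
      using mala_accept_mix_sqnorm_le[OF h(1)] by (rule ennreal_leI)
    finally show "(\<integral>\<^sup>+z. ennreal (sqnorm d z) \<partial>accept_reject d h x y) \<le> ennreal (sqnorm d y)" .
  qed
  also have "\<dots> = ennreal ((1 - h)\<^sup>2 * sqnorm d x + 2 * h * d)"
    using h by (intro nn_integral_mala_proposal_sqnorm) simp
  also have "\<dots> \<le> ennreal (sqnorm d x + 2 * h * d)"
  proof (rule ennreal_leI)
    have "(1 - h)\<^sup>2 \<le> 1" using h by (simp add: power2_eq_square algebra_simps)
    then show "(1 - h)\<^sup>2 * sqnorm d x + 2 * h * d \<le> sqnorm d x + 2 * h * d"
      using sqnorm_nonneg by (simp add: mult_left_le_one_le)
  qed
  finally show ?thesis .
qed

text \<open>A uniform measure on a null set is the zero measure, so this needs the positivity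
  of the Gaussian mass of \<open>{|x|\<^sup>2 \<le> d/2}\<close>.\<close>
lemma prob_space_mala_init: "prob_space (mala_init d)"
  unfolding mala_init_def
  by (rule prob_space_uniform_measure)
    (use gauss_sqnorm_le_pos[of d] emeasure_gauss_neq_top in \<open>auto simp del: space_gauss\<close>)

lemma mala_init_in_space_prob_algebra: "mala_init d \<in> space (prob_algebra (state_space d))"
  using prob_space_mala_init by (simp add: space_prob_algebra mala_init_def sets_gauss)

lemma nn_integral_mala_init_sqnorm_le: "(\<integral>\<^sup>+x. ennreal (sqnorm d x) \<partial>mala_init d) \<le> ennreal (d / 2)"
proof -
  define S where "S = {x \<in> space (gauss d). sqnorm d x \<le> real d / 2}"
  have S[measurable]: "S \<in> sets (gauss d)" unfolding S_def by measurable
  have pos: "emeasure (gauss d) S \<noteq> 0"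
    using gauss_sqnorm_le_pos unfolding S_def by (metis less_irrefl)
  have "(\<integral>\<^sup>+x. ennreal (sqnorm d x) \<partial>mala_init d)
      = (\<integral>\<^sup>+x. ennreal (sqnorm d x) * indicator S x \<partial>gauss d) / emeasure (gauss d) S"
    unfolding mala_init_def S_def[symmetric] by (rule nn_integral_uniform_measure) simp_all
  also have "\<dots> \<le> (\<integral>\<^sup>+x. ennreal (d / 2) * indicator S x \<partial>gauss d) / emeasure (gauss d) S"
    by (intro divide_right_mono_ennreal nn_integral_mono) (auto simp: indicator_def S_def)
  also have "\<dots> = ennreal (d / 2)"
    using pos emeasure_gauss_neq_top
    by (simp add: nn_integral_cmult_indicator ennreal_mult_divide_eq)
  finally show ?thesis .
qed

lemma mala_law_in_space_prob_algebra:
  "mala_law d h (mala_init d) T \<in> space (prob_algebra (state_space d))"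
  unfolding mala_law_def
  by (rule funpow_bind_in_space_prob_algebra[OF measurable_mala_kernel mala_init_in_space_prob_algebra])

lemma nn_integral_mala_law_sqnorm_le:
  assumes "0 < h" "h \<le> 2"
  shows "(\<integral>\<^sup>+x. ennreal (sqnorm d x) \<partial>mala_law d h (mala_init d) T) \<le> ennreal (d / 2 + T * (2 * h * d))"
proof -
  have "(\<integral>\<^sup>+x. ennreal (sqnorm d x) \<partial>mala_law d h (mala_init d) T)
      \<le> (\<integral>\<^sup>+x. ennreal (sqnorm d x) \<partial>mala_init d) + of_nat T * ennreal (2 * h * d)"
    unfolding mala_law_def
    using mala_init_in_space_prob_algebra measurable_mala_kernel
  proof (rule nn_integral_funpow_bind_le_drift)
    fix x assume "x \<in> space (state_space d)"
    then show "(\<integral>\<^sup>+y. ennreal (sqnorm d y) \<partial>mala_kernel d h x) \<le> ennreal (sqnorm d x) + ennreal (2 * h * d)"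
      using nn_integral_mala_kernel_sqnorm_le[of x d h] assms sqnorm_nonneg[of d x]
      by (simp flip: ennreal_plus)
  qed simp
  also have "\<dots> \<le> ennreal (d / 2) + of_nat T * ennreal (2 * h * d)"
    using nn_integral_mala_init_sqnorm_le by (rule add_right_mono)
  also have "\<dots> = ennreal (d / 2 + T * (2 * h * d))"
    using assms by (simp add: ennreal_of_nat_eq_real_of_nat ennreal_mult'[symmetric] flip: ennreal_plus)
  finally show ?thesis .
qed

section \<open>Total variation lower bound\<close>

lemma tv_dist_ge_abs_measure_diff:
  assumes "\<pi> \<in> space (prob_algebra (state_space d))" "A \<in> sets (state_space d)"
  shows "\<bar>measure \<pi> A - measure (gauss d) A\<bar> \<le> tv_dist d \<pi> (gauss d)"
  unfolding tv_dist_def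
proof (rule cSUP_upper[OF assms(2)])
  interpret \<pi>: prob_space \<pi> using assms(1) by (simp add: space_prob_algebra)
  interpret G: prob_space "gauss d" by (rule prob_space_gauss)
  have "\<bar>measure \<pi> B - measure (gauss d) B\<bar> \<le> 1" for B
    using \<pi>.prob_le_1[of B] G.prob_le_1[of B] measure_nonneg[of \<pi> B] measure_nonneg[of "gauss d" B]
    by linarith
  then show "bdd_above ((\<lambda>A. \<bar>measure \<pi> A - measure (gauss d) A\<bar>) ` sets (state_space d))"
    by (intro bdd_aboveI) auto
qed

lemma exp_minus_one_lt: "exp (-1::real) < 41 / 100"
proof -
  have "(625/256::real) = (1 + 1/4) powr 4" by (simp add: powr_realpow power_divide)
  also have "\<dots> < exp 1" by (rule exp_1_gt_powr) simp
  finally show ?thesis by (simp add: exp_minus field_simps)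
qed

text \<open>The constants fit since \<open>1 - (1001/2000) / (22/25) - 1/100 > 41/100 > exp (-1)\<close>.\<close>
lemma tv_dist_gauss_gt_exp_minus_one:
  assumes \<pi>: "\<pi> \<in> space (prob_algebra (state_space d))" and "d > 0"
    and moment: "(\<integral>\<^sup>+x. ennreal (sqnorm d x) \<partial>\<pi>) \<le> ennreal (1001/2000 * d)"
    and tail: "measure (gauss d) {x \<in> space (gauss d). sqnorm d x \<le> 22/25 * d} \<le> 1/100"
  shows "exp (-1) < tv_dist d \<pi> (gauss d)"
proof -
  interpret \<pi>: prob_space \<pi> using \<pi> by (simp add: space_prob_algebra)
  have sets: "sets \<pi> = sets (state_space d)" using \<pi> by (simp add: space_prob_algebra)
  define A where "A = {x \<in> space (state_space d). sqnorm d x \<le> 22/25 * d}"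
  define B where "B = {x \<in> space (state_space d). 22/25 * d < sqnorm d x}"
  have A: "A \<in> sets (state_space d)" and B: "B \<in> sets (state_space d)"
    unfolding A_def B_def by measurable
  have "ennreal (22/25 * d) * emeasure \<pi> B = (\<integral>\<^sup>+x. ennreal (22/25 * d) * indicator B x \<partial>\<pi>)"
    using B sets by (simp add: nn_integral_cmult_indicator)
  also have "\<dots> \<le> (\<integral>\<^sup>+x. ennreal (sqnorm d x) \<partial>\<pi>)"
    by (intro nn_integral_mono) (auto simp: B_def indicator_def intro!: ennreal_leI)
  also note moment
  finally have "22/25 * d * \<pi>.prob B \<le> 1001/2000 * d"
    using \<open>d > 0\<close>
    by (simp add: \<pi>.emeasure_eq_measure ennreal_mult'[symmetric] ennreal_le_iff)
  then have "\<pi>.prob B \<le> 1001/1760"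
    using \<open>d > 0\<close> by (simp add: field_simps)
  moreover have "\<pi>.prob A = 1 - \<pi>.prob B"
  proof -
    have "B = space \<pi> - A"
      unfolding A_def B_def by (auto simp: sets_eq_imp_space_eq[OF sets])
    then show ?thesis using \<pi>.prob_compl[of A] A sets by simp
  qed
  moreover have "measure (gauss d) A \<le> 1/100"
    using tail by (simp add: A_def space_gauss)
  ultimately have "exp (-1) < \<bar>measure \<pi> A - measure (gauss d) A\<bar>"
    using exp_minus_one_lt by simp
  also have "\<dots> \<le> tv_dist d \<pi> (gauss d)"
    by (rule tv_dist_ge_abs_measure_diff[OF \<pi> A])
  finally show ?thesis .
qed

lemma tv_dist_mala_law_gt_exp_minus_one:
  assumes "0 < h" "h \<le> 2" "h * T \<le> 1/4000" "d > 0"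
    and "measure (gauss d) {x \<in> space (gauss d). sqnorm d x \<le> 22/25 * d} \<le> 1/100"
  shows "exp (-1) < tv_dist d (mala_law d h (mala_init d) T) (gauss d)"
proof (rule tv_dist_gauss_gt_exp_minus_one[OF mala_law_in_space_prob_algebra \<open>d > 0\<close> _ assms(5)])
  have "d / 2 + T * (2 * h * d) \<le> 1001/2000 * d"
    using mult_left_mono[OF assms(3), of "2 * real d"] by (simp add: algebra_simps)
  then show "(\<integral>\<^sup>+x. ennreal (sqnorm d x) \<partial>mala_law d h (mala_init d) T) \<le> ennreal (1001/2000 * d)"
    using nn_integral_mala_law_sqnorm_le[OF assms(1,2)] by (meson ennreal_leI order.trans)
qed

section \<open>Large dimension\<close>

lemma exp_div_sqrt_lt_1: "exp (11/250) / sqrt (11/10) < (1::real)"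
proof -
  have "(1/10::real) - (1/10)\<^sup>2 \<le> ln (1 + 1/10)"
    by (rule ln_one_plus_pos_lower_bound) auto
  then have "exp (22/250::real) < 11/10"
    by (subst ln_less_cancel_iff[symmetric]) (auto simp: power2_eq_square)
  then have "(exp (11/250::real))\<^sup>2 < 11/10"
    by (simp add: exp_double[symmetric])
  then show ?thesis by (simp add: real_less_rsqrt)
qed

lemma eventually_gauss_sqnorm_le_small:
  "eventually (\<lambda>d. measure (gauss d) {x \<in> space (gauss d). sqnorm d x \<le> 22/25 * d} \<le> 1/100) sequentially"
proof -
  define q :: real where "q = exp (11/250) / sqrt (11/10)"
  have "(\<lambda>n. q ^ n) \<longlonglongrightarrow> 0"
    using exp_div_sqrt_lt_1 by (intro LIMSEQ_power_zero) (simp add: q_def)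
  then have small: "eventually (\<lambda>d. q ^ d < 1/100) sequentially"
    by (rule order_tendstoD) simp
  have bound: "measure (gauss d) {x \<in> space (gauss d). sqnorm d x \<le> 22/25 * d} \<le> q ^ d" for d
  proof -
    have "exp (1/20 * (22/25) * d) / sqrt (1 + 2 * (1/20)) ^ d = q ^ d"
      by (simp add: q_def power_divide exp_of_nat2_mult[symmetric] mult.commute)
    then show ?thesis using gauss_sqnorm_lower_tail[of "1/20" d "22/25"] by simp
  qed
  show ?thesis using small
  proof (rule eventually_mono)
    fix d assume "q ^ d < 1/100"
    then show "measure (gauss d) {x \<in> space (gauss d). sqnorm d x \<le> 22/25 * d} \<le> 1/100"
      using bound[of d] by linarith
  qed
qed

lemma eventually_ln_ge_1: "eventually (\<lambda>d::nat. 1 \<le> ln (real d)) sequentially"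
  using eventually_ge_at_top[of 3]
proof (rule eventually_mono)
  fix d :: nat assume "3 \<le> d"
  then have "exp 1 \<le> real d" using exp_le by linarith
  then show "1 \<le> ln (real d)" using \<open>3 \<le> d\<close> by (subst ln_ge_iff) auto
qed

lemma eventually_ln_div_le:
  assumes "C > 0"
  shows "eventually (\<lambda>d::nat. C * ln (real d) / real d \<le> 2) sequentially"
proof -
  have "(\<lambda>n::nat. ln (real n) / real n) \<longlonglongrightarrow> 0" by real_asymp
  then have "eventually (\<lambda>n::nat. ln (real n) / real n < 2 / C) sequentially"
    by (rule order_tendstoD) (use assms in simp)
  then show ?thesis
    by (rule eventually_mono) (use assms in \<open>auto simp: field_simps\<close>)
qed

lemma step_size_time_bounds:
  fixes C D L \<kappa> h T :: real
  assumes "C > 0" "D > 0" "L \<ge> 1" "\<kappa> \<ge> 1" "C * L / D \<le> 2"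
    and h: "0 < h" "h \<le> C * L / (\<kappa> * D)" and T: "0 \<le> T" "T \<le> 1 / (4000 * C) * \<kappa> * D / L\<^sup>2"
  shows "h \<le> 2" and "h * T \<le> 1/4000"
proof -
  have "C * L / (\<kappa> * D) \<le> C * L / D"
    using assms by (intro divide_left_mono) (auto intro: mult_pos_pos)
  then show "h \<le> 2" using h assms(5) by linarith
  have "h * T \<le> (C * L / (\<kappa> * D)) * (1 / (4000 * C) * \<kappa> * D / L\<^sup>2)"
    using h T by (intro mult_mono) auto
  also have "\<dots> = 1 / (4000 * L)"
    using assms by (simp add: power2_eq_square field_simps)
  also have "\<dots> \<le> 1 / 4000"
    using assms by (simp add: field_simps)
  finally show "h * T \<le> 1/4000" .
qed

theorem proposition3:
  fixes C :: real
  assumes "C > 0"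
  shows "\<exists>c::real. c > 0 \<and> (\<exists>d0::nat. \<forall>d\<ge>d0. \<forall>\<kappa>::real. \<kappa> \<ge> 1 \<longrightarrow>
           (\<forall>h::real. 0 < h \<and> h \<le> C * ln (real d) / (\<kappa> * real d) \<longrightarrow>
             (\<forall>T::nat. real T \<le> c * \<kappa> * real d / (ln (real d))\<^sup>2 \<longrightarrow>
                tv_dist d (mala_law d h (mala_init d) T) (gauss d) > exp (-1))))"
proof -
  have "eventually (\<lambda>d. 1 \<le> ln (real d) \<and> C * ln (real d) / real d \<le> 2
      \<and> measure (gauss d) {x \<in> space (gauss d). sqnorm d x \<le> 22/25 * d} \<le> 1/100) sequentially"
    using eventually_ln_ge_1 eventually_ln_div_le[OF assms] eventually_gauss_sqnorm_le_small
    by (auto intro: eventually_conj)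
  then obtain d0 where d0: "\<And>d. d \<ge> d0 \<Longrightarrow> 1 \<le> ln (real d) \<and> C * ln (real d) / real d \<le> 2
      \<and> measure (gauss d) {x \<in> space (gauss d). sqnorm d x \<le> 22/25 * d} \<le> 1/100"
    unfolding eventually_sequentially by blast
  show ?thesis
  proof (intro exI conjI allI impI)
    show "1 / (4000 * C) > 0" using assms by simp
    fix d \<kappa> h T
    assume "d0 \<le> d" "1 \<le> \<kappa>" "0 < h \<and> h \<le> C * ln (real d) / (\<kappa> * real d)"
      and "real T \<le> 1 / (4000 * C) * \<kappa> * real d / (ln (real d))\<^sup>2"
    moreover from d0[OF \<open>d0 \<le> d\<close>] have "d > 0" by (cases d) auto
    ultimately have "h \<le> 2" "h * T \<le> 1/4000"
      using step_size_time_bounds[OF assms, of "real d" "ln (real d)" \<kappa> h T] d0 by auto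
    then show "tv_dist d (mala_law d h (mala_init d) T) (gauss d) > exp (-1)"
      using tv_dist_mala_law_gt_exp_minus_one \<open>d > 0\<close> \<open>0 < h \<and> _\<close> d0[OF \<open>d0 \<le> d\<close>] by auto
  qed
qed

end
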